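(* Let $r\in[0,1]$, $\sigma>0$, $L_2>0$, $K_+,K_-\in\mathbb N_0$. There exist a dataset space $\mathbb X$ of finite sets, a pair of datasets $x\simeq_{K_+,K_-}x'$, and a function $h:\mathbb Y\to\mathbb R^D$ with $\max_{y\simeq_\pm y'}\|h(y)-h(y')\|_2=L_2$ such that, for $M=B\circ S$ with $S$ Poisson subsampling at rate $r$ and $B(y)=h(y)+V$, $V\sim\mathcal N(0,\sigma^2I_D)$, $$\Psi_\alpha(m_x\|m_{x'})=\Psi_\alpha\Big(\sum_{i=1}^{K_-+1}f^{(1)}_i\,\mathrm{Binom}(i-1\mid K_-,r)\ \Big\|\ \sum_{j=1}^{K_++1}f^{(2)}_j\,\mathrm{Binom}(j-1\mid K_+,r)\Big),$$ with $f^{(1)}_i$ the univariate normal density with mean $i-1$ and standard deviation $\sigma/L_2$ and $f^{(2)}_j$ the univariate normal density with mean $-(j-1)$ and standard deviation $\sigma/L_2$.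
   Context: Batches are subsets $y\subseteq x$ of datasets; Poisson subsampling with rate $r$: $s_x(y)=r^{|y|}(1-r)^{|x|-|y|}$ for $y\subseteq x$; $m_x(z)=\sum_y b_y(z)s_x(y)$ with $b_y$ the density of $B(y)$. $y\simeq_\pm y'$ iff one is obtained from the other by inserting or removing a single element. $x\simeq_{K_+,K_-}x'$ iff $x'=(x\setminus g_-)\cup g_+$ with $g_-\subseteq x$, $|g_-|=K_-$, $g_+\cap x=\emptyset$, $|g_+|=K_+$. $\mathrm{Binom}(k\mid n,r)=\binom nk r^k(1-r)^{n-k}$. $H_\alpha(p\|q)=\int\max\{p-\alpha q,0\}$ ($\alpha\ge0$), $\Lambda_\alpha(p\|q)=\int p^\alpha q^{1-\alpha}$ ($\alpha>1$); $\Psi_\alpha$ is either. *)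

theory Defs
  imports "HOL-Probability.Probability"
begin

definition insdel_neighbor :: "'e set \<Rightarrow> 'e set \<Rightarrow> bool" where
  "insdel_neighbor y y' \<longleftrightarrow> (\<exists>a. a \<notin> y \<and> y' = insert a y) \<or> (\<exists>a. a \<notin> y' \<and> y = insert a y')"

definition group_neighbor :: "nat \<Rightarrow> nat \<Rightarrow> 'e set \<Rightarrow> 'e set \<Rightarrow> bool" where
  "group_neighbor Kp Km x x' \<longleftrightarrow>
     (\<exists>gm gp. gm \<subseteq> x \<and> finite gm \<and> card gm = Km \<and> gp \<inter> x = {} \<and> finite gp \<and> card gp = Kp
             \<and> x' = (x - gm) \<union> gp)"

definition binom_prob :: "nat \<Rightarrow> nat \<Rightarrow> real \<Rightarrow> real" where
  "binom_prob k n r = real (n choose k) * r ^ k * (1 - r) ^ (n - k)"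

definition poisson_sub :: "real \<Rightarrow> 'e set \<Rightarrow> 'e set \<Rightarrow> real" where
  "poisson_sub r x y = (if y \<subseteq> x then r ^ card y * (1 - r) ^ (card x - card y) else 0)"

definition gauss_density :: "real \<Rightarrow> 'a::euclidean_space \<Rightarrow> 'a \<Rightarrow> real" where
  "gauss_density \<sigma> \<mu> z = (1 / (sqrt (2 * pi) * \<sigma>)) ^ DIM('a) * exp (- (norm (z - \<mu>))\<^sup>2 / (2 * \<sigma>\<^sup>2))"

definition subsampled_gauss_density ::
    "real \<Rightarrow> real \<Rightarrow> ('e set \<Rightarrow> 'a::euclidean_space) \<Rightarrow> 'e set \<Rightarrow> 'a \<Rightarrow> real" where
  "subsampled_gauss_density r \<sigma> h x z = (\<Sum>y\<in>Pow x. gauss_density \<sigma> (h y) z * poisson_sub r x y)"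

definition hockey_stick :: "'a measure \<Rightarrow> real \<Rightarrow> ('a \<Rightarrow> real) \<Rightarrow> ('a \<Rightarrow> real) \<Rightarrow> real" where
  "hockey_stick M \<alpha> p q = (\<integral>z. max (p z - \<alpha> * q z) 0 \<partial>M)"

definition renyi_moment :: "'a measure \<Rightarrow> real \<Rightarrow> ('a \<Rightarrow> real) \<Rightarrow> ('a \<Rightarrow> real) \<Rightarrow> real" where
  "renyi_moment M \<alpha> p q = (\<integral>z. p z powr \<alpha> * q z powr (1 - \<alpha>) \<partial>M)"

end

theory Submission
  imports Defs
begin

text \<open>Take \<open>x\<close> with \<open>K\<^sub>-\<close> records and let \<open>x'\<close> consist of \<open>K\<^sub>+\<close> fresh records, so that
  \<open>x \<simeq>\<^sub>K\<^sub>+\<^sub>,\<^sub>K\<^sub>- x'\<close> with \<open>g\<^sub>- = x\<close> and \<open>g\<^sub>+ = x'\<close>. Put \<open>h y = L\<^sub>2 (|y - x'| - |y \<inter> x'|) e\<close> for a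
  basis vector \<open>e\<close>: an insertion or deletion changes the signed count by exactly one, so the
  sensitivity is exactly \<open>L\<^sub>2\<close>. A batch of size \<open>k\<close> drawn from \<open>x\<close> is mapped to \<open>k L\<^sub>2 e\<close> and one
  drawn from \<open>x'\<close> to \<open>-k L\<^sub>2 e\<close>, so \<open>m\<^sub>x\<close> and \<open>m\<^sub>x\<^sub>'\<close> are the Gaussian density of the coordinates
  orthogonal to \<open>e\<close> times binomial mixtures of normals along \<open>e\<close>. Both divergences integrate a
  positively homogeneous function of the two densities, so the common factor integrates out,
  and rescaling the axis by \<open>1/L\<^sub>2\<close> leaves the univariate mixtures.\<close>

definition signed_count :: "'e set \<Rightarrow> 'e set \<Rightarrow> real" where
  "signed_count B y = real (card (y - B)) - real (card (y \<inter> B))"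

lemma signed_count_disjoint: "y \<inter> B = {} \<Longrightarrow> signed_count B y = real (card y)"
  by (simp add: signed_count_def Diff_triv)

lemma signed_count_subset: "y \<subseteq> B \<Longrightarrow> signed_count B y = - real (card y)"
  by (simp add: signed_count_def Int_absorb2 Diff_eq_empty_iff[THEN iffD2])

lemma signed_count_insert:
  assumes "finite y" "a \<notin> y"
  shows "\<bar>signed_count B (insert a y) - signed_count B y\<bar> = 1"
proof (cases "a \<in> B")
  case True
  then have "insert a y - B = y - B" "insert a y \<inter> B = insert a (y \<inter> B)" by auto
  then show ?thesis using assms by (simp add: signed_count_def)
next
  case False
  then have "insert a y - B = insert a (y - B)" "insert a y \<inter> B = y \<inter> B" by auto
  then show ?thesis using assms by (simp add: signed_count_def)
qed

lemma insdel_neighbor_signed_count: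
  assumes "finite y" "finite y'" "insdel_neighbor y y'"
  shows "\<bar>signed_count B y - signed_count B y'\<bar> = 1"
  using assms signed_count_insert unfolding insdel_neighbor_def
  by (auto simp: abs_minus_commute)

lemma signed_count_axis_sensitivity:
  fixes b0 :: "'a::euclidean_space" and B :: "'e set"
  assumes "b0 \<in> Basis" "L \<ge> 0"
  defines "h \<equiv> \<lambda>y. (L * signed_count B y) *\<^sub>R b0"
  shows "(\<forall>y y'. finite y \<and> finite y' \<and> insdel_neighbor y y' \<longrightarrow> norm (h y - h y') \<le> L) \<and>
         (\<exists>y y'. finite y \<and> finite y' \<and> insdel_neighbor y y' \<and> norm (h y - h y') = L)"
proof -
  have norm_diff: "norm (h y - h y') = L" if "finite y" "finite y'" "insdel_neighbor y y'" for y y'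
  proof -
    have "h y - h y' = (L * (signed_count B y - signed_count B y')) *\<^sub>R b0"
      by (simp add: h_def scaleR_diff_left right_diff_distrib)
    then show ?thesis
      using assms insdel_neighbor_signed_count[OF that] by (simp add: abs_mult)
  qed
  have "insdel_neighbor {} {undefined :: 'e}"
    by (simp add: insdel_neighbor_def)
  then have "\<exists>y y'. finite y \<and> finite y' \<and> insdel_neighbor y y' \<and> norm (h y - h y') = L"
    by (intro exI[of _ "{}"] exI[of _ "{undefined}"]) (simp add: norm_diff)
  then show ?thesis
    using norm_diff by auto
qed

lemma group_neighbor_disjoint:
  assumes "finite x" "finite x'" "x \<inter> x' = {}"
  shows "group_neighbor (card x') (card x) x x'"
  unfolding group_neighbor_def
  by (rule exI[of _ x], rule exI[of _ x']) (use assms in auto)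

lemma sum_Pow_by_card:
  fixes g :: "nat \<Rightarrow> 'b::comm_semiring_1"
  assumes "finite S"
  shows "(\<Sum>y\<in>Pow S. g (card y)) = (\<Sum>k\<le>card S. of_nat (card S choose k) * g k)"
proof -
  have "(\<Sum>y\<in>Pow S. g (card y)) = (\<Sum>k\<le>card S. \<Sum>y\<in>{y \<in> Pow S. card y = k}. g (card y))"
    by (rule sum.group[symmetric]) (use assms in \<open>auto simp: card_mono\<close>)
  also have "\<dots> = (\<Sum>k\<le>card S. of_nat (card S choose k) * g k)"
  proof (rule sum.cong[OF refl])
    fix k
    have "{y \<in> Pow S. card y = k} = {y. y \<subseteq> S \<and> card y = k}" by auto
    then show "(\<Sum>y\<in>{y \<in> Pow S. card y = k}. g (card y)) = of_nat (card S choose k) * g k"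
      using n_subsets[OF assms, of k] by simp
  qed
  finally show ?thesis .
qed

definition orth_gauss_density :: "real \<Rightarrow> 'a::euclidean_space \<Rightarrow> 'a \<Rightarrow> real" where
  "orth_gauss_density \<sigma> b0 z = (\<Prod>b\<in>Basis - {b0}. normal_density 0 \<sigma> (z \<bullet> b))"

lemma orth_gauss_density_pos: "\<sigma> > 0 \<Longrightarrow> orth_gauss_density \<sigma> b0 z > 0"
  unfolding orth_gauss_density_def by (simp add: prod_pos normal_density_pos)

lemma gauss_density_eq_prod_normal_density:
  fixes \<mu> z :: "'a::euclidean_space"
  assumes "\<sigma> > 0"
  shows "gauss_density \<sigma> \<mu> z = (\<Prod>b\<in>Basis. normal_density (\<mu> \<bullet> b) \<sigma> (z \<bullet> b))"
proof -
  have norm_sq: "(norm (z - \<mu>))\<^sup>2 = (\<Sum>b\<in>Basis. (z \<bullet> b - \<mu> \<bullet> b)\<^sup>2)"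
    unfolding power2_norm_eq_inner
    by (subst euclidean_inner) (simp add: power2_eq_square inner_diff_left)
  have "sqrt (2 * pi * \<sigma>\<^sup>2) = sqrt (2 * pi) * \<sigma>"
    using assms by (simp add: real_sqrt_mult)
  moreover have "gauss_density \<sigma> \<mu> z
      = (\<Prod>b\<in>(Basis::'a set). 1 / (sqrt (2 * pi) * \<sigma>)) * (\<Prod>b\<in>Basis. exp (- (z \<bullet> b - \<mu> \<bullet> b)\<^sup>2 / (2 * \<sigma>\<^sup>2)))"
    unfolding gauss_density_def norm_sq
    by (simp add: exp_sum[symmetric] sum_negf sum_divide_distrib[symmetric])
  ultimately show ?thesis
    unfolding prod.distrib[symmetric] normal_density_def by (simp add: power2_commute)
qed

lemma gauss_density_axis:
  fixes b0 z :: "'a::euclidean_space"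
  assumes b0: "b0 \<in> Basis" and "\<sigma> > 0"
  shows "gauss_density \<sigma> (c *\<^sub>R b0) z = orth_gauss_density \<sigma> b0 z * normal_density c \<sigma> (z \<bullet> b0)"
proof -
  have "gauss_density \<sigma> (c *\<^sub>R b0) z
      = normal_density c \<sigma> (z \<bullet> b0) * (\<Prod>b\<in>Basis - {b0}. normal_density ((c *\<^sub>R b0) \<bullet> b) \<sigma> (z \<bullet> b))"
    using b0 by (simp add: gauss_density_eq_prod_normal_density[OF \<open>\<sigma> > 0\<close>] prod.remove[OF finite_Basis b0])
  also have "(\<Prod>b\<in>Basis - {b0}. normal_density ((c *\<^sub>R b0) \<bullet> b) \<sigma> (z \<bullet> b)) = orth_gauss_density \<sigma> b0 z"
    unfolding orth_gauss_density_def by (rule prod.cong) (use b0 in \<open>auto simp: inner_Basis\<close>)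
  finally show ?thesis by simp
qed

lemma normal_density_scale:
  assumes "L > 0" "\<sigma> > 0"
  shows "normal_density (L * \<mu>) \<sigma> u = normal_density \<mu> (\<sigma> / L) (u / L) / L"
proof -
  have "- (u / L - \<mu>)\<^sup>2 / (2 * (\<sigma> / L)\<^sup>2) = - (u - L * \<mu>)\<^sup>2 / (2 * \<sigma>\<^sup>2)"
    using assms by (simp add: field_simps power2_eq_square)
  moreover have "sqrt (2 * pi * (\<sigma> / L)\<^sup>2) = sqrt (2 * pi * \<sigma>\<^sup>2) / L"
    using assms by (simp add: real_sqrt_mult real_sqrt_divide power_divide)
  ultimately show ?thesis using assms by (simp add: normal_density_def)
qed

lemma subsampled_gauss_density_axis:
  fixes b0 z :: "'a::euclidean_space"
  assumes b0: "b0 \<in> Basis" and \<sigma>: "\<sigma> > 0" and S: "finite S"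
    and h: "\<And>y. y \<subseteq> S \<Longrightarrow> h y = c (card y) *\<^sub>R b0"
  shows "subsampled_gauss_density r \<sigma> h S z = orth_gauss_density \<sigma> b0 z *
     (\<Sum>k\<le>card S. normal_density (c k) \<sigma> (z \<bullet> b0) * binom_prob k (card S) r)"
proof -
  define G where "G k = orth_gauss_density \<sigma> b0 z * normal_density (c k) \<sigma> (z \<bullet> b0) *
    (r ^ k * (1 - r) ^ (card S - k))" for k
  have "subsampled_gauss_density r \<sigma> h S z = (\<Sum>y\<in>Pow S. G (card y))"
    unfolding subsampled_gauss_density_def
    by (rule sum.cong) (auto simp: h gauss_density_axis[OF b0 \<sigma>] poisson_sub_def G_def)
  also have "\<dots> = (\<Sum>k\<le>card S. real (card S choose k) * G k)"
    by (rule sum_Pow_by_card[OF S])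
  finally show ?thesis
    by (simp add: sum_distrib_left G_def binom_prob_def algebra_simps)
qed

lemma subsampled_gauss_density_axis_scaled:
  fixes b0 z :: "'a::euclidean_space"
  assumes "b0 \<in> Basis" "\<sigma> > 0" "L > 0" "finite S"
    and "\<And>y. y \<subseteq> S \<Longrightarrow> h y = (L * c (card y)) *\<^sub>R b0"
  shows "subsampled_gauss_density r \<sigma> h S z = orth_gauss_density \<sigma> b0 z *
     ((\<Sum>i=1..card S + 1. normal_density (c (i - 1)) (\<sigma> / L) ((z \<bullet> b0) / L) * binom_prob (i - 1) (card S) r) / L)"
  using subsampled_gauss_density_axis[of b0 \<sigma> S h "\<lambda>k. L * c k" r z] assms
  by (simp add: normal_density_scale sum_divide_distrib atMost_atLeast0
      sum.atLeast_Suc_atMost_Suc_shift del: sum.cl_ivl_Suc)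

lemma subsampled_gauss_density_signed_count_disjoint:
  fixes b0 z :: "'a::euclidean_space"
  assumes "b0 \<in> Basis" "\<sigma> > 0" "L > 0" "finite x" "x \<inter> x' = {}"
  shows "subsampled_gauss_density r \<sigma> (\<lambda>y. (L * signed_count x' y) *\<^sub>R b0) x z = orth_gauss_density \<sigma> b0 z *
     ((\<Sum>i=1..card x + 1. normal_density (real (i - 1)) (\<sigma> / L) ((z \<bullet> b0) / L) * binom_prob (i - 1) (card x) r) / L)"
proof (rule subsampled_gauss_density_axis_scaled[where c = real, OF assms(1-4)])
  fix y assume "y \<subseteq> x"
  then have "y \<inter> x' = {}" using assms(5) by blast
  then show "(L * signed_count x' y) *\<^sub>R b0 = (L * real (card y)) *\<^sub>R b0"
    by (simp add: signed_count_disjoint)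
qed

lemma subsampled_gauss_density_signed_count_self:
  fixes b0 z :: "'a::euclidean_space"
  assumes "b0 \<in> Basis" "\<sigma> > 0" "L > 0" "finite x'"
  shows "subsampled_gauss_density r \<sigma> (\<lambda>y. (L * signed_count x' y) *\<^sub>R b0) x' z = orth_gauss_density \<sigma> b0 z *
     ((\<Sum>i=1..card x' + 1. normal_density (- real (i - 1)) (\<sigma> / L) ((z \<bullet> b0) / L) * binom_prob (i - 1) (card x') r) / L)"
  by (rule subsampled_gauss_density_axis_scaled[where c = "\<lambda>k. - real k", OF assms])
    (simp add: signed_count_subset)

lemma integral_lborel_rescale:
  fixes F :: "real \<Rightarrow> real"
  assumes "L > 0"
  shows "(\<integral>u. F (u / L) / L \<partial>lborel) = (\<integral>t. F t \<partial>lborel)"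
  using lborel_integral_real_affine[of L "\<lambda>u. F (u / L) / L" 0] assms by simp

lemma integral_orth_gauss_density_times_axis:
  fixes b0 :: "'a::euclidean_space"
  assumes b0: "b0 \<in> Basis" and \<sigma>: "\<sigma> > 0"
    and G[measurable]: "G \<in> borel_measurable borel" and G_nonneg: "\<And>t. 0 \<le> G t"
  shows "(\<integral>z. orth_gauss_density \<sigma> b0 z * G (z \<bullet> b0) \<partial>(lborel::'a measure)) = (\<integral>t. G t \<partial>lborel)"
proof -
  define \<phi> where "\<phi> b = (if b = b0 then G else normal_density 0 \<sigma>)" for b
  have \<phi>_meas[measurable]: "\<phi> b \<in> borel_measurable borel" for b
    by (simp add: \<phi>_def)
  have \<phi>_nonneg: "0 \<le> \<phi> b t" for b t
    by (simp add: \<phi>_def G_nonneg)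
  have integrand: "orth_gauss_density \<sigma> b0 z * G (z \<bullet> b0) = (\<Prod>b\<in>Basis. \<phi> b (z \<bullet> b))" for z :: 'a
  proof -
    have "(\<Prod>b\<in>Basis - {b0}. \<phi> b (z \<bullet> b)) = orth_gauss_density \<sigma> b0 z"
      unfolding orth_gauss_density_def by (rule prod.cong) (auto simp: \<phi>_def)
    moreover have "\<phi> b0 = G" by (simp add: \<phi>_def)
    ultimately show ?thesis by (simp add: prod.remove[OF finite_Basis b0] mult.commute)
  qed
  have "(\<integral>\<^sup>+z. ennreal (\<Prod>b\<in>Basis. \<phi> b (z \<bullet> b)) \<partial>(lborel::'a measure))
      = (\<integral>\<^sup>+z. (\<Prod>b\<in>Basis. ennreal (\<phi> b (z \<bullet> b))) \<partial>lborel)"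
    using \<phi>_nonneg by (simp add: prod_ennreal)
  also have "\<dots> = (\<Prod>b\<in>(Basis::'a set). \<integral>\<^sup>+t. ennreal (\<phi> b t) \<partial>lborel)"
    by (intro nn_integral_lborel_prod) auto
  also have "\<dots> = (\<integral>\<^sup>+t. ennreal (G t) \<partial>lborel)"
    using \<sigma> by (simp add: prod.remove[OF finite_Basis b0] \<phi>_def nn_integral_eq_integral
        integrable_normal_density)
  finally have nn_eq: "(\<integral>\<^sup>+z. ennreal (orth_gauss_density \<sigma> b0 z * G (z \<bullet> b0)) \<partial>(lborel::'a measure))
      = (\<integral>\<^sup>+t. ennreal (G t) \<partial>lborel)"
    unfolding integrand .
  have "(\<lambda>z::'a. orth_gauss_density \<sigma> b0 z * G (z \<bullet> b0)) \<in> borel_measurable borel"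
    unfolding integrand by (intro borel_measurable_prod measurable_compose[OF _ \<phi>_meas]) simp
  then have "(\<integral>z. orth_gauss_density \<sigma> b0 z * G (z \<bullet> b0) \<partial>(lborel::'a measure))
      = enn2real (\<integral>\<^sup>+z. ennreal (orth_gauss_density \<sigma> b0 z * G (z \<bullet> b0)) \<partial>lborel)"
    using G_nonneg less_imp_le[OF orth_gauss_density_pos[OF \<sigma>]]
    by (intro integral_eq_nn_integral) (auto intro!: AE_I2 mult_nonneg_nonneg)
  also have "\<dots> = (\<integral>t. G t \<partial>lborel)"
    unfolding nn_eq using G_nonneg by (intro integral_eq_nn_integral[symmetric]) auto
  finally show ?thesis .
qed

lemma integral_homogeneous_orth_gauss_axis:
  fixes b0 :: "'a::euclidean_space" and \<Phi> :: "real \<Rightarrow> real \<Rightarrow> real"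
  assumes b0: "b0 \<in> Basis" and \<sigma>: "\<sigma> > 0" and L: "L > 0"
    and hom: "\<And>c a b. c > 0 \<Longrightarrow> \<Phi> (c * a) (c * b) = c * \<Phi> a b"
    and meas: "(\<lambda>t. \<Phi> (f t) (g t)) \<in> borel_measurable borel"
    and nonneg: "\<And>t. 0 \<le> \<Phi> (f t) (g t)"
  shows "(\<integral>z. \<Phi> (orth_gauss_density \<sigma> b0 z * (f ((z \<bullet> b0) / L) / L))
                  (orth_gauss_density \<sigma> b0 z * (g ((z \<bullet> b0) / L) / L)) \<partial>(lborel::'a measure))
       = (\<integral>t. \<Phi> (f t) (g t) \<partial>lborel)"
proof -
  have scaled: "\<Phi> (p * (a / L)) (p * (b / L)) = p * (\<Phi> a b / L)" if "p > 0" for p a b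
    using hom[of "p / L" a b] that L by (simp add: mult.commute)
  have "(\<integral>z. \<Phi> (orth_gauss_density \<sigma> b0 z * (f ((z \<bullet> b0) / L) / L))
                    (orth_gauss_density \<sigma> b0 z * (g ((z \<bullet> b0) / L) / L)) \<partial>(lborel::'a measure))
      = (\<integral>z. orth_gauss_density \<sigma> b0 z * (\<Phi> (f ((z \<bullet> b0) / L)) (g ((z \<bullet> b0) / L)) / L) \<partial>lborel)"
    by (rule Bochner_Integration.integral_cong[OF refl], rule scaled[OF orth_gauss_density_pos[OF \<sigma>]])
  also have "\<dots> = (\<integral>u. \<Phi> (f (u / L)) (g (u / L)) / L \<partial>lborel)"
    using L nonneg
    by (intro integral_orth_gauss_density_times_axis[OF b0 \<sigma>] borel_measurable_divide
        measurable_compose[OF _ meas]) auto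
  also have "\<dots> = (\<integral>t. \<Phi> (f t) (g t) \<partial>lborel)"
    by (rule integral_lborel_rescale[OF L])
  finally show ?thesis .
qed

lemma max_diff_homogeneous: "c > 0 \<Longrightarrow> max (c * a - \<alpha> * (c * b)) 0 = c * max (a - \<alpha> * b) (0::real)"
  by (simp add: max_mult_distrib_left algebra_simps)

lemma powr_mult_homogeneous:
  fixes c a b \<alpha> :: real
  assumes "c > 0"
  shows "(c * a) powr \<alpha> * (c * b) powr (1 - \<alpha>) = c * (a powr \<alpha> * b powr (1 - \<alpha>))"
proof -
  have "c powr \<alpha> * c powr (1 - \<alpha>) = c"
    using assms by (simp add: powr_add[symmetric])
  then show ?thesis by (simp add: powr_mult algebra_simps)
qed

theorem mainTheorem9:
  fixes r \<sigma> L2 :: real and Kp Km :: nat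
  assumes "0 \<le> r" "r \<le> 1" "\<sigma> > 0" "L2 > 0"
  shows "\<exists>(x :: nat set) x' (h :: nat set \<Rightarrow> 'a::euclidean_space).
     finite x \<and> finite x' \<and> group_neighbor Kp Km x x' \<and>
     (\<forall>y y'. finite y \<and> finite y' \<and> insdel_neighbor y y' \<longrightarrow> norm (h y - h y') \<le> L2) \<and>
     (\<exists>y y'. finite y \<and> finite y' \<and> insdel_neighbor y y' \<and> norm (h y - h y') = L2) \<and>
     (let m1 = subsampled_gauss_density r \<sigma> h x;
          m2 = subsampled_gauss_density r \<sigma> h x';
          f1 = (\<lambda>t. \<Sum>i=1..Km+1. normal_density (real (i - 1)) (\<sigma> / L2) t * binom_prob (i - 1) Km r);
          f2 = (\<lambda>t. \<Sum>j=1..Kp+1. normal_density (- real (j - 1)) (\<sigma> / L2) t * binom_prob (j - 1) Kp r)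
      in (\<forall>\<alpha>\<ge>0. hockey_stick lborel \<alpha> m1 m2 = hockey_stick lborel \<alpha> f1 f2) \<and>
         (\<forall>\<alpha>>1. renyi_moment lborel \<alpha> m1 m2 = renyi_moment lborel \<alpha> f1 f2))"
proof -
  obtain b0 :: 'a where b0: "b0 \<in> Basis" using nonempty_Basis by blast
  define x :: "nat set" where "x = {..<Km}"
  define x' :: "nat set" where "x' = {Km..<Km + Kp}"
  define h :: "nat set \<Rightarrow> 'a" where "h = (\<lambda>y. (L2 * signed_count x' y) *\<^sub>R b0)"
  define F1 where "F1 = (\<lambda>t. \<Sum>i=1..Km+1. normal_density (real (i - 1)) (\<sigma> / L2) t * binom_prob (i - 1) Km r)"
  define F2 where "F2 = (\<lambda>t. \<Sum>j=1..Kp+1. normal_density (- real (j - 1)) (\<sigma> / L2) t * binom_prob (j - 1) Kp r)"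
  have fin: "finite x" "finite x'" and disj: "x \<inter> x' = {}" and card: "card x = Km" "card x' = Kp"
    by (auto simp: x_def x'_def)
  have neighbors: "group_neighbor Kp Km x x'"
    using group_neighbor_disjoint[OF fin disj] by (simp add: card)
  have sensitivity: "(\<forall>y y'. finite y \<and> finite y' \<and> insdel_neighbor y y' \<longrightarrow> norm (h y - h y') \<le> L2) \<and>
      (\<exists>y y'. finite y \<and> finite y' \<and> insdel_neighbor y y' \<and> norm (h y - h y') = L2)"
    unfolding h_def by (rule signed_count_axis_sensitivity[OF b0 less_imp_le[OF assms(4)]])
  have m1: "subsampled_gauss_density r \<sigma> h x z = orth_gauss_density \<sigma> b0 z * (F1 ((z \<bullet> b0) / L2) / L2)" for z
    unfolding h_def F1_def
    by (rule subsampled_gauss_density_signed_count_disjoint[OF b0 assms(3,4) fin(1) disj, unfolded card])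
  have m2: "subsampled_gauss_density r \<sigma> h x' z = orth_gauss_density \<sigma> b0 z * (F2 ((z \<bullet> b0) / L2) / L2)" for z
    unfolding h_def F2_def
    by (rule subsampled_gauss_density_signed_count_self[OF b0 assms(3,4) fin(2), unfolded card])
  have hockey_stick: "hockey_stick lborel \<alpha> (subsampled_gauss_density r \<sigma> h x) (subsampled_gauss_density r \<sigma> h x')
      = hockey_stick lborel \<alpha> F1 F2" for \<alpha>
    unfolding hockey_stick_def m1 m2
    by (rule integral_homogeneous_orth_gauss_axis[where \<Phi> = "\<lambda>a b. max (a - \<alpha> * b) 0",
          OF b0 assms(3,4) max_diff_homogeneous])
      (auto simp: F1_def F2_def)
  have renyi_moment: "renyi_moment lborel \<alpha> (subsampled_gauss_density r \<sigma> h x) (subsampled_gauss_density r \<sigma> h x')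
      = renyi_moment lborel \<alpha> F1 F2" for \<alpha>
    unfolding renyi_moment_def m1 m2
    by (rule integral_homogeneous_orth_gauss_axis[where \<Phi> = "\<lambda>a b. a powr \<alpha> * b powr (1 - \<alpha>)",
          OF b0 assms(3,4) powr_mult_homogeneous])
      (auto simp: F1_def F2_def)
  show ?thesis
    unfolding Let_def F1_def[symmetric] F2_def[symmetric]
    using fin neighbors sensitivity hockey_stick renyi_moment
    by (intro exI[of _ x] exI[of _ x'] exI[of _ h]) simp
qed

end
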